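(* Let $K$ be a number field with ring of integers $R$, and suppose $R$ is not a unique factorization domain. Then there exists a polynomial $f\in R[x]$ of degree at least $2$ that is indecomposable over $R$ but decomposable over $K$.
   Context: For a ring $A$ and $f\in A[x]$ with $\deg f\ge 2$, $f$ is called decomposable over $A$ if $f(x)=g(h(x))$ for some $g,h\in A[x]$ of degree at least $2$, and indecomposable over $A$ otherwise. *)

theory Defs
  imports "HOL-Computational_Algebra.Polynomial" "HOL-Algebra.Ring_Divisibility"
begin

text \<open>A number field, realised (up to isomorphism) as a subfield of the complex numbers
  that is finite-dimensional as a vector space over the rationals.\<close>
definition number_field :: "complex set \<Rightarrow> bool" where
  "number_field K \<longleftrightarrow>
     0 \<in> K \<and> 1 \<in> K \<and>
     (\<forall>x\<in>K. \<forall>y\<in>K. x + y \<in> K \<and> x - y \<in> K \<and> x * y \<in> K) \<and>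
     (\<forall>x\<in>K. x \<noteq> 0 \<longrightarrow> inverse x \<in> K) \<and>
     (\<exists>B. finite B \<and> B \<subseteq> K \<and> (\<forall>x\<in>K. \<exists>c. x = (\<Sum>b\<in>B. of_rat (c b) * b)))"

definition algebraic_integer :: "complex \<Rightarrow> bool" where
  "algebraic_integer x \<longleftrightarrow>
     (\<exists>p :: int poly. lead_coeff p = 1 \<and> poly (map_poly of_int p) x = 0)"

definition ring_of_integers :: "complex set \<Rightarrow> complex set" where
  "ring_of_integers K = {x \<in> K. algebraic_integer x}"

definition subring_structure :: "complex set \<Rightarrow> complex ring" where
  "subring_structure S = \<lparr>carrier = S, monoid.mult = (*), one = 1, zero = 0, add = (+)\<rparr>"

definition poly_over :: "complex set \<Rightarrow> complex poly \<Rightarrow> bool" where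
  "poly_over A p \<longleftrightarrow> (\<forall>i. Polynomial.coeff p i \<in> A)"

definition decomposable_over :: "complex set \<Rightarrow> complex poly \<Rightarrow> bool" where
  "decomposable_over A f \<longleftrightarrow>
     Polynomial.degree f \<ge> 2 \<and>
     (\<exists>g h. poly_over A g \<and> poly_over A h \<and> Polynomial.degree g \<ge> 2 \<and> Polynomial.degree h \<ge> 2 \<and>
            f = pcompose g h)"

definition indecomposable_over :: "complex set \<Rightarrow> complex poly \<Rightarrow> bool" where
  "indecomposable_over A f \<longleftrightarrow> Polynomial.degree f \<ge> 2 \<and> \<not> decomposable_over A f"

end

theory Submission
  imports Defs "Jordan_Normal_Form.Char_Poly"
begin

text \<open>
  Suppose, contrapositively, that every polynomial over the ring of integers \<open>\<O>\<close> that is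
  decomposable over \<open>K\<close> is already decomposable over \<open>\<O>\<close>. Given \<open>t \<in> K\<close>, call \<open>p \<in> \<O> - {0}\<close>
  a denominator of \<open>t\<close> if \<open>p t \<in> \<O>\<close>, and choose a denominator \<open>p\<^sub>0\<close> of least absolute norm.
  For any denominator \<open>e\<close> the polynomial
  \<open>(p\<^sub>0\<^sup>2 X\<^sup>2 + e X) \<circ> (X\<^sup>2 + t X) = p\<^sub>0\<^sup>2 X\<^sup>4 + 2 p\<^sub>0\<^sup>2 t X\<^sup>3 + (e + p\<^sub>0\<^sup>2 t\<^sup>2) X\<^sup>2 + e t X\<close>
  has coefficients in \<open>\<O>\<close>, so it is also a composition of two quadratics \<open>A X\<^sup>2 + B X + C\<close> and
  \<open>p X\<^sup>2 + q X + r\<close> over \<open>\<O>\<close>. Comparing coefficients gives \<open>A p\<^sup>2 = p\<^sub>0\<^sup>2\<close>, \<open>q = p t\<close> and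
  \<open>e = p (2 A r + B)\<close>. So \<open>p\<close> is a denominator too, \<open>u = p\<^sub>0 / p\<close> is integral since \<open>u\<^sup>2 = A\<close>, and
  minimality of \<open>p\<^sub>0\<close> forces \<open>u\<close> to be a unit; hence \<open>p\<^sub>0\<close> divides every denominator \<open>e\<close>.
  Applied to \<open>t = a / b\<close>, this makes \<open>b / p\<^sub>0\<close> a gcd of \<open>a\<close> and \<open>b\<close>. Together with the divisor
  chain condition, which the multiplicativity of the norm provides, \<open>\<O>\<close> is factorial.
\<close>

section \<open>Algebraic integers form a ring\<close>

definition int_span_stable :: "'a::comm_ring_1 \<Rightarrow> 'i set \<Rightarrow> ('i \<Rightarrow> 'a) \<Rightarrow> bool" where
  "int_span_stable x I w \<longleftrightarrow> (\<exists>A::'i \<Rightarrow> 'i \<Rightarrow> int. \<forall>i\<in>I. x * w i = (\<Sum>j\<in>I. of_int (A i j) * w j))"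

text \<open>An eigenvalue of an integer matrix is a root of its monic integer characteristic polynomial.\<close>
lemma algebraic_int_if_int_span_stable:
  fixes x :: "'a::field_char_0" and w :: "'i \<Rightarrow> 'a"
  assumes fin: "finite I" and i0: "i0 \<in> I" "w i0 \<noteq> 0" and stable: "int_span_stable x I w"
  shows "algebraic_int x"
proof -
  obtain A where act: "\<And>i. i \<in> I \<Longrightarrow> x * w i = (\<Sum>j\<in>I. of_int (A i j) * w j)"
    using stable unfolding int_span_stable_def by blast
  define n where "n = card I"
  obtain f where f: "bij_betw f {0..<n} I" using ex_bij_betw_nat_finite[OF fin] n_def by blast
  define Am :: "int mat" where "Am = mat n n (\<lambda>(i,j). A (f i) (f j))"
  define v where "v = vec n (\<lambda>i. w (f i))"
  have Am: "Am \<in> carrier_mat n n" unfolding Am_def by simp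
  obtain k where k: "k < n" "f k = i0" using f i0 unfolding bij_betw_def by (metis atLeastLessThan_iff imageE)
  have "eigenvector (map_mat of_int Am) v x"
    unfolding eigenvector_def
  proof (intro conjI)
    show "v \<in> carrier_vec (dim_row (map_mat of_int Am))" unfolding v_def Am_def by simp
    show "v \<noteq> 0\<^sub>v (dim_row (map_mat of_int Am))"
    proof
      assume "v = 0\<^sub>v (dim_row (map_mat of_int Am))"
      hence "v $ k = 0" using k Am by simp
      thus False using k i0 unfolding v_def by simp
    qed
    show "map_mat of_int Am *\<^sub>v v = x \<cdot>\<^sub>v v"
    proof (rule eq_vecI)
      fix i assume "i < dim_vec (x \<cdot>\<^sub>v v)"
      hence i: "i < n" unfolding v_def by simp
      have fi: "f i \<in> I" using f i unfolding bij_betw_def by auto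
      have "(map_mat of_int Am *\<^sub>v v) $ i = (\<Sum>j\<in>{0..<n}. of_int (A (f i) (f j)) * w (f j))"
        using i unfolding mult_mat_vec_def scalar_prod_def Am_def v_def by (simp add: row_def)
      also have "\<dots> = (\<Sum>j\<in>I. of_int (A (f i) j) * w j)"
        using sum.reindex_bij_betw[OF f, of "\<lambda>j. of_int (A (f i) j) * w j"] by simp
      also have "\<dots> = x * w (f i)" using act[OF fi] by simp
      finally show "(map_mat of_int Am *\<^sub>v v) $ i = (x \<cdot>\<^sub>v v) $ i" using i unfolding v_def by simp
    qed (simp add: v_def Am_def)
  qed
  hence "poly (char_poly (map_mat of_int Am)) x = 0"
    using eigenvalue_root_char_poly[of "map_mat of_int Am" n] Am unfolding eigenvalue_def by auto
  hence "poly (of_int_poly (char_poly Am)) x = 0" using of_int_hom.char_poly_hom[OF Am] by metis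
  moreover have "lead_coeff (char_poly Am) = 1" using degree_monic_char_poly[OF Am] by simp
  ultimately show ?thesis unfolding algebraic_int_altdef_ipoly by blast
qed

lemma int_span_stable_add:
  assumes "int_span_stable x I w" "int_span_stable y I w"
  shows "int_span_stable (x + y) I w"
proof -
  obtain A where A: "\<forall>i\<in>I. x * w i = (\<Sum>j\<in>I. of_int (A i j) * w j)"
    using assms(1) unfolding int_span_stable_def by blast
  obtain B where B: "\<forall>i\<in>I. y * w i = (\<Sum>j\<in>I. of_int (B i j) * w j)"
    using assms(2) unfolding int_span_stable_def by blast
  show ?thesis unfolding int_span_stable_def
    by (rule exI[of _ "\<lambda>i j. A i j + B i j"]) (auto simp: A B distrib_right sum.distrib)
qed

lemma int_span_stable_mult:
  assumes "int_span_stable x I w" "int_span_stable y I w"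
  shows "int_span_stable (x * y) I w"
proof -
  obtain A where A: "\<forall>i\<in>I. x * w i = (\<Sum>j\<in>I. of_int (A i j) * w j)"
    using assms(1) unfolding int_span_stable_def by blast
  obtain B where B: "\<forall>i\<in>I. y * w i = (\<Sum>j\<in>I. of_int (B i j) * w j)"
    using assms(2) unfolding int_span_stable_def by blast
  show ?thesis unfolding int_span_stable_def
  proof (rule exI[of _ "\<lambda>i k. \<Sum>j\<in>I. B i j * A j k"], intro ballI)
    fix i assume i: "i \<in> I"
    have "x * y * w i = (\<Sum>j\<in>I. of_int (B i j) * (x * w j))"
      using B i by (simp add: sum_distrib_left algebra_simps)
    also have "\<dots> = (\<Sum>j\<in>I. \<Sum>k\<in>I. of_int (B i j) * of_int (A j k) * w k)"
      using A by (simp add: sum_distrib_left mult.assoc)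
    also have "\<dots> = (\<Sum>k\<in>I. of_int (\<Sum>j\<in>I. B i j * A j k) * w k)"
      by (subst sum.swap) (simp add: sum_distrib_right)
    finally show "x * y * w i = (\<Sum>k\<in>I. of_int (\<Sum>j\<in>I. B i j * A j k) * w k)" .
  qed
qed

lemma int_span_stable_tensor_left:
  fixes u :: "'i \<Rightarrow> 'a::comm_ring_1" and v :: "'j \<Rightarrow> 'a"
  assumes "int_span_stable x I u" "finite J"
  shows "int_span_stable x (I \<times> J) (\<lambda>(a, b). u a * v b)"
proof -
  obtain A where A: "\<forall>i\<in>I. x * u i = (\<Sum>j\<in>I. of_int (A i j) * u j)"
    using assms(1) unfolding int_span_stable_def by blast
  define A' :: "'i \<times> 'j \<Rightarrow> 'i \<times> 'j \<Rightarrow> int" where "A' = (\<lambda>(a, b) (c, d). if b = d then A a c else 0)"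
  show ?thesis unfolding int_span_stable_def
  proof (rule exI[of _ A'], intro ballI)
    fix p assume "p \<in> I \<times> J"
    then obtain a b where ab: "p = (a, b)" "a \<in> I" "b \<in> J" by auto
    have "x * (u a * v b) = (\<Sum>c\<in>I. of_int (A a c) * (u c * v b))"
      using A ab by (simp add: mult.assoc[symmetric] sum_distrib_right)
    also have "\<dots> = (\<Sum>c\<in>I. \<Sum>d\<in>J. if b = d then of_int (A a c) * (u c * v d) else 0)"
      using ab(3) assms(2) by simp
    also have "\<dots> = (\<Sum>c\<in>I. \<Sum>d\<in>J. of_int (A' (a, b) (c, d)) * (u c * v d))"
      unfolding A'_def by (intro sum.cong) auto
    finally show "x * (\<lambda>(a, b). u a * v b) p = (\<Sum>q\<in>I \<times> J. of_int (A' p q) * (\<lambda>(a, b). u a * v b) q)"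
      using ab by (simp add: sum.cartesian_product case_prod_unfold)
  qed
qed

lemma int_span_stable_tensor_right:
  fixes u :: "'i \<Rightarrow> 'a::comm_ring_1" and v :: "'j \<Rightarrow> 'a"
  assumes "int_span_stable y J v" "finite I"
  shows "int_span_stable y (I \<times> J) (\<lambda>(a, b). u a * v b)"
proof -
  obtain B where B: "\<forall>i\<in>J. y * v i = (\<Sum>j\<in>J. of_int (B i j) * v j)"
    using assms(1) unfolding int_span_stable_def by blast
  define B' :: "'i \<times> 'j \<Rightarrow> 'i \<times> 'j \<Rightarrow> int" where "B' = (\<lambda>(a, b) (c, d). if a = c then B b d else 0)"
  show ?thesis unfolding int_span_stable_def
  proof (rule exI[of _ B'], intro ballI)
    fix p assume "p \<in> I \<times> J"
    then obtain a b where ab: "p = (a, b)" "a \<in> I" "b \<in> J" by auto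
    have "y * (u a * v b) = u a * (y * v b)" by (rule mult.left_commute)
    also have "\<dots> = u a * (\<Sum>d\<in>J. of_int (B b d) * v d)" using B ab(3) by simp
    also have "\<dots> = (\<Sum>d\<in>J. of_int (B b d) * (u a * v d))"
      by (simp add: sum_distrib_left algebra_simps)
    also have "\<dots> = (\<Sum>c\<in>I. if a = c then (\<Sum>d\<in>J. of_int (B b d) * (u c * v d)) else 0)"
      using ab(2) assms(2) by simp
    also have "\<dots> = (\<Sum>c\<in>I. \<Sum>d\<in>J. of_int (B' (a, b) (c, d)) * (u c * v d))"
      unfolding B'_def by (intro sum.cong) auto
    finally show "y * (\<lambda>(a, b). u a * v b) p = (\<Sum>q\<in>I \<times> J. of_int (B' p q) * (\<lambda>(a, b). u a * v b) q)"
      using ab by (simp add: sum.cartesian_product case_prod_unfold)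
  qed
qed

lemma algebraic_int_powers_int_span_stable:
  fixes x :: "'a::field_char_0"
  assumes "algebraic_int x"
  obtains m where "m > 0" "int_span_stable x {..<m} (\<lambda>a. x ^ a)"
proof -
  obtain p where p: "poly (of_int_poly p) x = 0" "lead_coeff p = 1"
    using assms unfolding algebraic_int_altdef_ipoly by blast
  define m where "m = degree p"
  have "m > 0"
  proof (rule ccontr)
    assume "\<not> m > 0"
    hence "p = [:1:]" using p(2) unfolding m_def by (metis degree_eq_zeroE lead_coeff_pCons(2) pCons_0_0 gr0I)
    thus False using p(1) by simp
  qed
  have "0 = (\<Sum>i\<le>m. of_int (Polynomial.coeff p i) * x ^ i)"
    using p(1) unfolding poly_altdef m_def by simp
  also have "\<dots> = (\<Sum>i<m. of_int (Polynomial.coeff p i) * x ^ i) + x ^ m"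
    using p(2) unfolding m_def by (simp add: lessThan_Suc_atMost[symmetric])
  finally have xm: "x ^ m = (\<Sum>i<m. of_int (- Polynomial.coeff p i) * x ^ i)"
    by (simp add: sum_negf eq_neg_iff_add_eq_0 add.commute)
  define S where "S = (\<lambda>a c. if a + 1 < m then (if c = a + 1 then 1 else 0) else - Polynomial.coeff p c)"
  have "int_span_stable x {..<m} (\<lambda>a. x ^ a)" unfolding int_span_stable_def
  proof (rule exI[of _ S], intro ballI)
    fix a assume a: "a \<in> {..<m}"
    show "x * x ^ a = (\<Sum>c\<in>{..<m}. of_int (S a c) * x ^ c)"
    proof (cases "a + 1 < m")
      case True
      have "(\<Sum>c\<in>{..<m}. of_int (S a c) * x ^ c) = (\<Sum>c\<in>{..<m}. if c = a + 1 then x ^ c else 0)"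
        unfolding S_def using True by (intro sum.cong) auto
      also have "\<dots> = x ^ (a + 1)" using True by (simp add: sum.delta)
      finally show ?thesis by simp
    next
      case False
      hence "Suc a = m" using a by simp
      hence "x * x ^ a = x ^ m" by (metis power_Suc)
      thus ?thesis unfolding xm S_def using False by simp
    qed
  qed
  with \<open>m > 0\<close> show ?thesis using that by blast
qed

lemma algebraic_int_add_mult:
  fixes x y :: "'a::field_char_0"
  assumes "algebraic_int x" "algebraic_int y"
  shows "algebraic_int (x + y) \<and> algebraic_int (x * y)"
proof -
  obtain m where m: "m > 0" "int_span_stable x {..<m} (\<lambda>a. x ^ a)"
    using algebraic_int_powers_int_span_stable[OF assms(1)] by blast
  obtain n where n: "n > 0" "int_span_stable y {..<n} (\<lambda>a. y ^ a)"
    using algebraic_int_powers_int_span_stable[OF assms(2)] by blast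
  let ?I = "{..<m} \<times> {..<n}" and ?w = "\<lambda>(a, b). x ^ a * y ^ b"
  have x: "int_span_stable x ?I ?w" by (rule int_span_stable_tensor_left[OF m(2)]) simp
  have y: "int_span_stable y ?I ?w" by (rule int_span_stable_tensor_right[OF n(2)]) simp
  have fin: "finite ?I" and i0: "(0, 0) \<in> ?I" "?w (0, 0) \<noteq> 0" using m n by auto
  show ?thesis
    using algebraic_int_if_int_span_stable[OF fin i0 int_span_stable_add[OF x y]]
          algebraic_int_if_int_span_stable[OF fin i0 int_span_stable_mult[OF x y]] by blast
qed

lemma algebraic_int_add: "algebraic_int x \<Longrightarrow> algebraic_int y \<Longrightarrow> algebraic_int (x + y :: 'a::field_char_0)"
  and algebraic_int_mult: "algebraic_int x \<Longrightarrow> algebraic_int y \<Longrightarrow> algebraic_int (x * y :: 'a::field_char_0)"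
  using algebraic_int_add_mult by blast+

lemma algebraic_int_diff: "algebraic_int x \<Longrightarrow> algebraic_int y \<Longrightarrow> algebraic_int (x - y :: 'a::field_char_0)"
  using algebraic_int_add[of x "-y"] by auto

lemma algebraic_int_coeff_prod_linear:
  fixes as :: "'a::field_char_0 list"
  assumes "\<And>a. a \<in> set as \<Longrightarrow> algebraic_int a"
  shows "algebraic_int (Polynomial.coeff (\<Prod>a\<leftarrow>as. [:- a, 1:]) i)"
  using assms
proof (induction as arbitrary: i)
  case (Cons a as)
  let ?q = "\<Prod>a\<leftarrow>as. [:- a, 1:]"
  have "(\<Prod>a\<leftarrow>a # as. [:- a, 1:]) = Polynomial.smult (- a) ?q + pCons 0 ?q"
    by (simp add: mult.commute[of "[:-a, 1:]"] mult_pCons_right)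
  moreover have "algebraic_int (- a * Polynomial.coeff ?q i + Polynomial.coeff (pCons 0 ?q) i)"
    using Cons by (cases i) (auto intro!: algebraic_int_add algebraic_int_diff algebraic_int_mult)
  ultimately show ?case by simp
qed (cases i; simp)

lemma algebraic_integer_iff_algebraic_int: "algebraic_integer x \<longleftrightarrow> algebraic_int x"
  unfolding algebraic_integer_def algebraic_int_altdef_ipoly by auto

section \<open>The regular representation of a number field\<close>

definition rat_spans :: "'a::field_char_0 set \<Rightarrow> 'a set \<Rightarrow> bool" where
  "rat_spans B K \<longleftrightarrow> (\<forall>x\<in>K. \<exists>c. x = (\<Sum>b\<in>B. of_rat (c b) * b))"

definition rat_independent :: "'a::field_char_0 set \<Rightarrow> bool" where
  "rat_independent B \<longleftrightarrow> (\<forall>c. (\<Sum>b\<in>B. of_rat (c b) * b) = 0 \<longrightarrow> (\<forall>b\<in>B. c b = 0))"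

lemma rat_spans_independent_subset:
  assumes "finite B" "rat_spans B K"
  shows "\<exists>B0\<subseteq>B. rat_spans B0 K \<and> rat_independent B0"
  using assms
proof (induction "card B" arbitrary: B rule: less_induct)
  case less
  show ?case
  proof (cases "rat_independent B")
    case True thus ?thesis using less by blast
  next
    case False
    then obtain c b0 where c: "(\<Sum>b\<in>B. of_rat (c b) * b) = 0" "b0 \<in> B" "c b0 \<noteq> 0"
      unfolding rat_independent_def by blast
    define B' where "B' = B - {b0}"
    have fin': "finite B'" using less unfolding B'_def by simp
    have card': "card B' < card B" unfolding B'_def using less(2) c(2) by (metis card_Diff1_less)
    have split: "(\<Sum>b\<in>B. of_rat (d b) * b) = of_rat (d b0) * b0 + (\<Sum>b\<in>B'. of_rat (d b) * b)" for d
      unfolding B'_def using less(2) c(2) by (simp add: sum.remove)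
    have b0: "b0 = (\<Sum>b\<in>B'. of_rat (- c b / c b0) * b)"
    proof -
      have "of_rat (c b0) * b0 = - (\<Sum>b\<in>B'. of_rat (c b) * b)"
        using c(1) split[of c] by (simp add: eq_neg_iff_add_eq_0)
      hence "b0 = - (\<Sum>b\<in>B'. of_rat (c b) * b) / of_rat (c b0)" using c(3) by (simp add: field_simps)
      thus ?thesis by (simp add: sum_divide_distrib sum_negf of_rat_divide of_rat_minus)
    qed
    have "rat_spans B' K" unfolding rat_spans_def
    proof
      fix x assume "x \<in> K"
      then obtain d where "x = (\<Sum>b\<in>B. of_rat (d b) * b)" using less(3) unfolding rat_spans_def by blast
      also have "\<dots> = of_rat (d b0) * (\<Sum>b\<in>B'. of_rat (- c b / c b0) * b) + (\<Sum>b\<in>B'. of_rat (d b) * b)"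
        by (subst b0[symmetric]) (rule split)
      also have "\<dots> = (\<Sum>b\<in>B'. of_rat (d b - d b0 * c b / c b0) * b)"
        by (simp add: sum_distrib_left sum.distrib[symmetric] of_rat_diff of_rat_mult of_rat_divide
              of_rat_minus algebra_simps)
      finally show "\<exists>c. x = (\<Sum>b\<in>B'. of_rat (c b) * b)"
        by (rule exI[of _ "\<lambda>b. d b - d b0 * c b / c b0"])
    qed
    from less(1)[OF card' fin' this] show ?thesis unfolding B'_def by blast
  qed
qed

locale number_field_basis =
  fixes K :: "complex set" and n :: nat and b :: "nat \<Rightarrow> complex"
  assumes number_field: "number_field K"
    and basis_in: "\<And>i. i < n \<Longrightarrow> b i \<in> K"
    and basis_spans: "\<And>x. x \<in> K \<Longrightarrow> \<exists>c. x = (\<Sum>i<n. of_rat (c i) * b i)"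
    and basis_independent: "\<And>c i. (\<Sum>i<n. of_rat (c i) * b i) = 0 \<Longrightarrow> i < n \<Longrightarrow> c i = 0"

lemma number_field_basis_exists:
  assumes "number_field K"
  shows "\<exists>n b. number_field_basis K n b"
proof -
  obtain B where B: "finite B" "B \<subseteq> K" "rat_spans B K"
    using assms unfolding number_field_def rat_spans_def by blast
  obtain B0 where B0: "B0 \<subseteq> B" "rat_spans B0 K" "rat_independent B0"
    using rat_spans_independent_subset[OF B(1,3)] by blast
  obtain bs where bs: "set bs = B0" "distinct bs"
    using finite_distinct_list[OF finite_subset[OF B0(1) B(1)]] by blast
  define n where "n = length bs"
  have bij: "bij_betw ((!) bs) {..<n} B0" using bij_betw_nth[OF bs(2)] bs(1) n_def by simp
  have reindex: "(\<Sum>x\<in>B0. f x) = (\<Sum>i<n. f (bs ! i))" for f :: "complex \<Rightarrow> complex"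
    using sum.reindex_bij_betw[OF bij] by metis
  have "number_field_basis K n ((!) bs)"
  proof
    show "number_field K" by fact
    have nth_B0: "bs ! i \<in> B0" if "i < n" for i
      using nth_mem[of i bs] that bs(1) unfolding n_def by simp
    show "bs ! i \<in> K" if "i < n" for i
      using nth_B0[OF that] B0(1) B(2) by blast
    show "\<exists>c. x = (\<Sum>i<n. of_rat (c i) * bs ! i)" if "x \<in> K" for x
    proof -
      have "\<exists>c. x = (\<Sum>b\<in>B0. of_rat (c b) * b)" using B0(2) that unfolding rat_spans_def by (rule bspec)
      then obtain c where "x = (\<Sum>b\<in>B0. of_rat (c b) * b)" by (elim exE)
      hence "x = (\<Sum>i<n. of_rat (c (bs ! i)) * bs ! i)" by (simp only: reindex)
      thus ?thesis by (rule exI[of _ "\<lambda>i. c (bs ! i)"])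
    qed
    show "c i = 0" if "(\<Sum>i<n. of_rat (c i) * bs ! i) = 0" "i < n" for c i
    proof -
      define d where "d = (\<lambda>x. c (inv_into {..<n} ((!) bs) x))"
      have d: "d (bs ! j) = c j" if "j < n" for j
        unfolding d_def using inv_into_f_f[OF bij_betw_imp_inj_on[OF bij]] that by simp
      have "(\<Sum>x\<in>B0. of_rat (d x) * x) = 0"
        using that(1) unfolding reindex by (simp add: d)
      hence "d (bs ! i) = 0" using B0(3) nth_B0[OF that(2)] unfolding rat_independent_def by blast
      thus ?thesis using d[OF that(2)] by simp
    qed
  qed
  thus ?thesis by blast
qed

context number_field_basis
begin

lemma K_0: "0 \<in> K" and K_1: "1 \<in> K"
  and K_add: "x \<in> K \<Longrightarrow> y \<in> K \<Longrightarrow> x + y \<in> K"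
  and K_diff: "x \<in> K \<Longrightarrow> y \<in> K \<Longrightarrow> x - y \<in> K"
  and K_mult: "x \<in> K \<Longrightarrow> y \<in> K \<Longrightarrow> x * y \<in> K"
  using number_field unfolding number_field_def by auto

lemma K_inverse: "x \<in> K \<Longrightarrow> inverse x \<in> K"
  using number_field K_0 unfolding number_field_def by (cases "x = 0") auto

lemma K_divide: "x \<in> K \<Longrightarrow> y \<in> K \<Longrightarrow> x / y \<in> K"
  using K_mult K_inverse by (simp add: divide_inverse)

lemma K_power: "x \<in> K \<Longrightarrow> x ^ k \<in> K"
  by (induction k) (auto intro: K_mult K_1)

definition coord :: "complex \<Rightarrow> nat \<Rightarrow> rat" where
  "coord x = (SOME c. x = (\<Sum>i<n. of_rat (c i) * b i))"

lemma coord: "x \<in> K \<Longrightarrow> x = (\<Sum>i<n. of_rat (coord x i) * b i)"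
  unfolding coord_def by (rule someI_ex[OF basis_spans])

lemma coord_unique:
  assumes "x \<in> K" "x = (\<Sum>i<n. of_rat (c i) * b i)" "i < n"
  shows "c i = coord x i"
proof -
  have "(\<Sum>i<n. of_rat (c i - coord x i) * b i) = (\<Sum>i<n. of_rat (c i) * b i) - (\<Sum>i<n. of_rat (coord x i) * b i)"
    by (simp add: of_rat_diff left_diff_distrib sum_subtractf)
  also have "\<dots> = 0" using assms(2) coord[OF assms(1)] by simp
  finally show ?thesis using basis_independent[of "\<lambda>i. c i - coord x i"] assms(3) by simp
qed

lemma basis_nonzero: "i < n \<Longrightarrow> b i \<noteq> 0"
proof
  assume i: "i < n" "b i = 0"
  have "(\<Sum>j<n. of_rat (if j = i then 1 else 0) * b j) = 0"
    using i by (intro sum.neutral) auto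
  thus False using basis_independent[of "\<lambda>j. if j = i then 1 else 0"] i(1) by fastforce
qed

lemma dimension_pos: "n > 0"
  using coord[OF K_1] by (cases n) auto

definition mult_mat :: "complex \<Rightarrow> rat mat" where
  "mult_mat x = mat n n (\<lambda>(i, j). coord (x * b i) j)"

lemma mult_mat_carrier [simp]: "mult_mat x \<in> carrier_mat n n"
  unfolding mult_mat_def by simp

lemma mult_mat_dims [simp]: "dim_row (mult_mat x) = n" "dim_col (mult_mat x) = n"
  unfolding mult_mat_def by simp_all

lemma mult_mat_index: "i < n \<Longrightarrow> j < n \<Longrightarrow> mult_mat x $$ (i, j) = coord (x * b i) j"
  unfolding mult_mat_def by simp

lemma mult_basis: "x \<in> K \<Longrightarrow> i < n \<Longrightarrow> x * b i = (\<Sum>j<n. of_rat (mult_mat x $$ (i, j)) * b j)"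
  using coord[OF K_mult[OF _ basis_in]] by (simp add: mult_mat_index)

lemma mult_mat_eqI:
  assumes "x \<in> K" "A \<in> carrier_mat n n"
    and "\<And>i. i < n \<Longrightarrow> x * b i = (\<Sum>j<n. of_rat (A $$ (i, j)) * b j)"
  shows "mult_mat x = A"
proof (rule eq_matI)
  fix i j assume "i < dim_row A" "j < dim_col A"
  hence ij: "i < n" "j < n" using assms(2) by auto
  show "mult_mat x $$ (i, j) = A $$ (i, j)"
    using coord_unique[OF K_mult[OF assms(1) basis_in[OF ij(1)]] assms(3)[OF ij(1)] ij(2)]
    by (simp add: mult_mat_index[OF ij])
qed (use assms(2) in auto)

lemma mult_mat_1: "mult_mat 1 = 1\<^sub>m n"
proof (rule mult_mat_eqI[OF K_1])
  fix i assume i: "i < n"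
  have "(\<Sum>j<n. of_rat (1\<^sub>m n $$ (i, j)) * b j) = (\<Sum>j<n. if j = i then b j else 0)"
    using i by (intro sum.cong) auto
  thus "1 * b i = (\<Sum>j<n. of_rat (1\<^sub>m n $$ (i, j)) * b j)" using i by simp
qed simp

lemma mult_mat_mult:
  assumes x: "x \<in> K" and y: "y \<in> K"
  shows "mult_mat (x * y) = mult_mat x * mult_mat y"
proof (rule mult_mat_eqI[OF K_mult[OF x y] mult_carrier_mat[OF mult_mat_carrier mult_mat_carrier]])
  fix i assume i: "i < n"
  have "x * y * b i = y * (\<Sum>j<n. of_rat (mult_mat x $$ (i, j)) * b j)"
    using mult_basis[OF x i] by (simp add: mult.commute mult.left_commute)
  also have "\<dots> = (\<Sum>j<n. of_rat (mult_mat x $$ (i, j)) * (y * b j))"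
    by (simp add: sum_distrib_left mult.left_commute)
  also have "\<dots> = (\<Sum>j<n. \<Sum>k<n. of_rat (mult_mat x $$ (i, j)) * of_rat (mult_mat y $$ (j, k)) * b k)"
    by (simp add: mult_basis[OF y] sum_distrib_left mult.assoc)
  also have "\<dots> = (\<Sum>k<n. of_rat ((mult_mat x * mult_mat y) $$ (i, k)) * b k)"
    using i by (subst sum.swap)
      (simp add: scalar_prod_def atLeast0LessThan mult_mat_index of_rat_sum of_rat_mult sum_distrib_right)
  finally show "x * y * b i = (\<Sum>k<n. of_rat ((mult_mat x * mult_mat y) $$ (i, k)) * b k)" .
qed

lemma mult_mat_power: "x \<in> K \<Longrightarrow> mult_mat (x ^ k) = mult_mat x ^\<^sub>m k"
proof (induction k)
  case (Suc k)
  have "mult_mat (x ^ Suc k) = mult_mat (x ^ k * x)" by (simp add: mult.commute)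
  also have "\<dots> = mult_mat x ^\<^sub>m Suc k" using Suc by (simp add: mult_mat_mult K_power)
  finally show ?case .
qed (simp add: mult_mat_1)

abbreviation mult_mat_complex :: "complex \<Rightarrow> complex mat" where
  "mult_mat_complex x \<equiv> map_mat of_rat (mult_mat x)"

lemma mult_mat_complex_power: "mult_mat_complex x ^\<^sub>m k = map_mat of_rat (mult_mat x ^\<^sub>m k)"
  by (rule of_rat_hom.mat_hom_pow[OF mult_mat_carrier, symmetric])

lemma char_poly_mult_mat_complex_root:
  assumes x: "x \<in> K"
  shows "poly (char_poly (mult_mat_complex x)) x = 0"
proof -
  have "eigenvector (mult_mat_complex x) (vec n b) x" unfolding eigenvector_def
  proof (intro conjI)
    show "vec n b \<in> carrier_vec (dim_row (mult_mat_complex x))" by simp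
    show "vec n b \<noteq> 0\<^sub>v (dim_row (mult_mat_complex x))"
      using basis_nonzero[OF dimension_pos] dimension_pos
      by (metis index_vec index_zero_vec(1) index_map_mat(2) mult_mat_dims(1))
    show "mult_mat_complex x *\<^sub>v vec n b = x \<cdot>\<^sub>v vec n b"
    proof (rule eq_vecI)
      fix i assume "i < dim_vec (x \<cdot>\<^sub>v vec n b)"
      hence i: "i < n" by simp
      have "(mult_mat_complex x *\<^sub>v vec n b) $ i = (\<Sum>j<n. of_rat (mult_mat x $$ (i, j)) * b j)"
        using i by (simp add: scalar_prod_def atLeast0LessThan)
      thus "(mult_mat_complex x *\<^sub>v vec n b) $ i = (x \<cdot>\<^sub>v vec n b) $ i"
        using mult_basis[OF x i] i by simp
    qed simp
  qed
  thus ?thesis using eigenvalue_root_char_poly[of "mult_mat_complex x" n] unfolding eigenvalue_def by auto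
qed

text \<open>Entrywise form of \<open>p(mult_mat x) = 0\<close>.\<close>
lemma int_poly_mult_mat_eq_0:
  assumes x: "x \<in> K" and p: "poly (of_int_poly p) x = 0" and i: "i < n" and j: "j < n"
  shows "(\<Sum>k\<le>degree p. of_int (Polynomial.coeff p k) * (mult_mat x ^\<^sub>m k) $$ (i, j)) = 0"
proof -
  let ?E = "\<lambda>j. \<Sum>k\<le>degree p. of_int (Polynomial.coeff p k) * (mult_mat x ^\<^sub>m k) $$ (i, j)"
  have "0 = poly (of_int_poly p) x * b i" using p by simp
  also have "\<dots> = (\<Sum>k\<le>degree p. of_int (Polynomial.coeff p k) * (x ^ k * b i))"
    by (simp add: poly_altdef sum_distrib_right mult.assoc)
  also have "\<dots> = (\<Sum>k\<le>degree p. of_int (Polynomial.coeff p k) *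
                    (\<Sum>j<n. of_rat ((mult_mat x ^\<^sub>m k) $$ (i, j)) * b j))"
    by (intro sum.cong refl) (simp add: mult_basis[OF K_power[OF x] i] mult_mat_power[OF x])
  also have "\<dots> = (\<Sum>j<n. of_rat (?E j) * b j)"
    by (simp add: sum_distrib_left sum_distrib_right of_rat_sum of_rat_mult mult.assoc
          sum.swap[of _ "{..<n}"])
  finally show ?thesis using basis_independent[of ?E, OF _ j] by simp
qed

lemma algebraic_int_eigenvalue_mult_mat_complex:
  assumes x: "x \<in> K" "algebraic_int x" and ev: "eigenvalue (mult_mat_complex x) \<mu>"
  shows "algebraic_int \<mu>"
proof -
  obtain p where p: "poly (of_int_poly p) x = 0" "lead_coeff p = 1"
    using x(2) unfolding algebraic_int_altdef_ipoly by blast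
  obtain v where v: "eigenvector (mult_mat_complex x) v \<mu>" using ev unfolding eigenvalue_def by blast
  have vc: "v \<in> carrier_vec n" "v \<noteq> 0\<^sub>v n" using v unfolding eigenvector_def by auto
  obtain i where i: "i < n" "v $ i \<noteq> 0" using vc by (metis eq_vecI carrier_vecD index_zero_vec(1,2))
  have "\<mu> ^ k * v $ i = (\<Sum>j<n. of_rat ((mult_mat x ^\<^sub>m k) $$ (i, j)) * v $ j)" for k
  proof -
    have "\<mu> ^ k * v $ i = (mult_mat_complex x ^\<^sub>m k *\<^sub>v v) $ i"
      using eigenvector_pow[of _ n, OF _ v] i vc by simp
    thus ?thesis using i vc by (simp add: mult_mat_complex_power scalar_prod_def atLeast0LessThan)
  qed
  hence "poly (of_int_poly p) \<mu> * v $ i =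
      (\<Sum>k\<le>degree p. of_int (Polynomial.coeff p k) * (\<Sum>j<n. of_rat ((mult_mat x ^\<^sub>m k) $$ (i, j)) * v $ j))"
    by (simp add: poly_altdef sum_distrib_right mult.assoc)
  also have "\<dots> = (\<Sum>j<n. of_rat (\<Sum>k\<le>degree p. of_int (Polynomial.coeff p k) * (mult_mat x ^\<^sub>m k) $$ (i, j)) * v $ j)"
    by (simp add: sum_distrib_left sum_distrib_right of_rat_sum of_rat_mult mult.assoc
          sum.swap[of _ "{..<n}"])
  also have "\<dots> = 0" using int_poly_mult_mat_eq_0[OF x(1) p(1) i(1)] by simp
  finally have "poly (of_int_poly p) \<mu> = 0" using i(2) by simp
  thus ?thesis using p(2) unfolding algebraic_int_altdef_ipoly by blast
qed

definition int_char_poly :: "complex \<Rightarrow> int poly" where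
  "int_char_poly x = map_poly floor (char_poly (mult_mat x))"

text \<open>The roots of the characteristic polynomial are algebraic integers, hence so are its
  rational coefficients; so they are integers.\<close>
lemma char_poly_mult_mat_complex_int:
  assumes x: "x \<in> K" "algebraic_int x"
  shows "char_poly (mult_mat_complex x) = of_int_poly (int_char_poly x)"
proof -
  have cp: "char_poly (mult_mat_complex x) = map_poly of_rat (char_poly (mult_mat x))"
    by (metis of_rat_hom.char_poly_hom mult_mat_carrier)
  obtain as where as: "char_poly (mult_mat_complex x) = (\<Prod>a\<leftarrow>as. [:- a, 1:])"
    using char_poly_factorized[of "mult_mat_complex x" n] by auto
  have "algebraic_int a" if "a \<in> set as" for a
  proof -
    have "poly (char_poly (mult_mat_complex x)) a = 0" unfolding as using that by (induction as) auto
    hence "eigenvalue (mult_mat_complex x) a" using eigenvalue_root_char_poly[of "mult_mat_complex x" n] by simp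
    thus ?thesis by (rule algebraic_int_eigenvalue_mult_mat_complex[OF x])
  qed
  hence "algebraic_int (Polynomial.coeff (char_poly (mult_mat_complex x)) i)" for i
    unfolding as by (intro algebraic_int_coeff_prod_linear) blast
  hence "of_rat (Polynomial.coeff (char_poly (mult_mat x)) i) \<in> (\<int> :: complex set)" for i
    unfolding cp by (auto intro!: rational_algebraic_int_is_int simp: coeff_map_poly)
  hence ints: "Polynomial.coeff (char_poly (mult_mat x)) i \<in> \<int>" for i
    by (metis Ints_cases Ints_of_int of_rat_eq_iff of_rat_of_int_eq)
  show ?thesis unfolding cp int_char_poly_def
  proof (rule poly_eqI)
    fix i
    obtain k where "Polynomial.coeff (char_poly (mult_mat x)) i = of_int k" using ints[of i] by (elim Ints_cases)
    thus "Polynomial.coeff (map_poly of_rat (char_poly (mult_mat x))) i =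
        Polynomial.coeff (of_int_poly (map_poly floor (char_poly (mult_mat x)))) i"
      by (simp add: coeff_map_poly)
  qed
qed

definition field_norm :: "complex \<Rightarrow> rat" where
  "field_norm x = det (mult_mat x)"

lemma field_norm_mult:
  assumes "x \<in> K" "y \<in> K"
  shows "field_norm (x * y) = field_norm x * field_norm y"
  unfolding field_norm_def mult_mat_mult[OF assms] by (rule det_mult[OF mult_mat_carrier mult_mat_carrier])

lemma field_norm_1: "field_norm 1 = 1"
  unfolding field_norm_def mult_mat_1 by simp

lemma field_norm_nonzero:
  assumes "x \<in> K" "x \<noteq> 0"
  shows "field_norm x \<noteq> 0"
proof
  assume "field_norm x = 0"
  hence "field_norm (x * inverse x) = 0" using field_norm_mult[OF assms(1) K_inverse[OF assms(1)]] by simp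
  thus False using assms(2) field_norm_1 by simp
qed

lemma field_norm_int_char_poly:
  assumes "x \<in> K" "algebraic_int x"
  shows "field_norm x = (-1) ^ n * of_int (Polynomial.coeff (int_char_poly x) 0)"
proof -
  have "(of_int (Polynomial.coeff (int_char_poly x) 0) :: complex) = poly (char_poly (mult_mat_complex x)) 0"
    using char_poly_mult_mat_complex_int[OF assms] by (simp add: poly_0_coeff_0)
  also have "\<dots> = det (- char_matrix (mult_mat_complex x) 0)"
    using char_poly_matrix[of "mult_mat_complex x" n] by simp
  also have "- char_matrix (mult_mat_complex x) 0 = (-1) \<cdot>\<^sub>m mult_mat_complex x"
    by (rule eq_matI) (auto simp: char_matrix_def)
  also have "det \<dots> = (-1) ^ n * det (mult_mat_complex x)" by simp
  also have "det (mult_mat_complex x) = of_rat (field_norm x)"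
    unfolding field_norm_def by (metis of_rat_hom.hom_det)
  finally have "(of_rat ((-1) ^ n * of_int (Polynomial.coeff (int_char_poly x) 0)) :: complex) = of_rat (field_norm x)"
    by (simp add: of_rat_mult of_rat_power)
  thus ?thesis by (simp only: of_rat_eq_iff)
qed

lemma field_norm_in_Ints: "x \<in> K \<Longrightarrow> algebraic_int x \<Longrightarrow> field_norm x \<in> \<int>"
  using field_norm_int_char_poly by simp

text \<open>If \<open>N(x) = \<plusminus>1\<close>, the constant term \<open>c\<close> of the characteristic polynomial \<open>P\<close> satisfies
  \<open>c\<^sup>2 = 1\<close>, and then \<open>c P\<close> is an integer polynomial with constant term \<open>1\<close> vanishing at \<open>x\<close>.\<close>
lemma algebraic_int_inverse_if_field_norm_unit:
  assumes x: "x \<in> K" "algebraic_int x" and N: "field_norm x = 1 \<or> field_norm x = -1"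
  shows "algebraic_int (inverse x)"
proof -
  define c where "c = Polynomial.coeff (int_char_poly x) 0"
  have "(of_int (c * c) :: rat) = ((-1) ^ n)\<^sup>2 * (field_norm x * field_norm x)"
    using field_norm_int_char_poly[OF x] unfolding c_def by (simp add: power2_eq_square algebra_simps)
  also have "\<dots> = 1" using N by (auto simp flip: power_mult power_mult_distrib)
  finally have c: "c * c = 1" by (metis of_int_1 of_int_eq_iff)
  have root: "poly (of_int_poly (int_char_poly x)) x = 0"
    using char_poly_mult_mat_complex_root[OF x(1)] char_poly_mult_mat_complex_int[OF x] by simp
  show ?thesis
    by (rule algebraic_int_inverse[of "Polynomial.smult (of_int c) (of_int_poly (int_char_poly x))"])
       (use root c in \<open>simp_all add: coeff_map_poly c_def flip: of_int_mult\<close>)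
qed

definition abs_norm :: "complex \<Rightarrow> nat" where
  "abs_norm x = nat \<lfloor>\<bar>field_norm x\<bar>\<rfloor>"

lemma abs_norm_less_mult:
  assumes x: "x \<in> K" "algebraic_int x" "x \<noteq> 0"
    and c: "c \<in> K" "algebraic_int c" "c \<noteq> 0" "\<not> algebraic_int (inverse c)"
  shows "abs_norm x < abs_norm (x * c)"
proof -
  obtain k where k: "field_norm x = of_int k" using field_norm_in_Ints[OF x(1,2)] by (elim Ints_cases)
  obtain l where l: "field_norm c = of_int l" using field_norm_in_Ints[OF c(1,2)] by (elim Ints_cases)
  have k0: "k \<noteq> 0" using field_norm_nonzero[OF x(1,3)] k by auto
  have l1: "\<bar>l\<bar> > 1"
    using field_norm_nonzero[OF c(1,3)] algebraic_int_inverse_if_field_norm_unit[OF c(1,2)] c(4) l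
    by (cases "l = -1") (auto simp: abs_if)
  have "nat \<bar>k\<bar> < nat \<bar>k * l\<bar>" using k0 l1 by (simp add: abs_mult)
  moreover have "abs_norm x = nat \<bar>k\<bar>"
    unfolding abs_norm_def k by (simp only: of_int_abs[symmetric] floor_of_int)
  moreover have "abs_norm (x * c) = nat \<bar>k * l\<bar>"
    unfolding abs_norm_def field_norm_mult[OF x(1) c(1)] k l
    by (simp only: of_int_mult[symmetric] of_int_abs[symmetric] floor_of_int)
  ultimately show ?thesis by (simp only:)
qed

end

section \<open>Quartics that are compositions of quadratics\<close>

lemma poly_eq_if_degree_le_2:
  fixes P :: "'a::zero poly"
  assumes "degree P \<le> 2"
  shows "P = [:Polynomial.coeff P 0, Polynomial.coeff P 1, Polynomial.coeff P 2:]"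
  using assms by (intro poly_eqI) (auto simp: coeff_pCons coeff_eq_0 numeral_2_eq_2 split: nat.split)

lemma degree_pcompose_eq_4_imp_quadratic:
  fixes g h :: "'a::idom poly"
  assumes "degree (pcompose g h) = 4" "degree g \<ge> 2" "degree h \<ge> 2"
  shows "degree g = 2 \<and> degree h = 2"
proof -
  have gh: "degree g * degree h = 4" using assms(1) by (simp add: degree_pcompose)
  have "degree g * 2 \<le> 4" "2 * degree h \<le> 4"
    using mult_le_mono2[OF assms(3), of "degree g"] mult_le_mono1[OF assms(2), of "degree h"] gh by simp_all
  thus ?thesis using assms(2,3) by simp
qed

lemma coeff_pcompose_quadratics:
  fixes A B C p q r :: "'a::comm_ring_1"
  shows "Polynomial.coeff (pcompose [:C, B, A:] [:r, q, p:]) 4 = A * p ^ 2"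
    and "Polynomial.coeff (pcompose [:C, B, A:] [:r, q, p:]) 3 = 2 * A * p * q"
    and "Polynomial.coeff (pcompose [:C, B, A:] [:r, q, p:]) 2 = A * (q ^ 2 + 2 * p * r) + B * p"
  by (simp_all add: pcompose_pCons eval_nat_numeral algebra_simps power2_eq_square)

lemma pcompose_denominator_quartic:
  fixes e s t :: "'a::comm_ring_1"
  shows "pcompose [:0, e, s:] [:0, t, 1:] = [:0, e * t, e + s * t ^ 2, 2 * s * t, s:]"
  by (simp add: pcompose_pCons algebra_simps power2_eq_square)

lemma poly_over_pCons: "0 \<in> A \<Longrightarrow> poly_over A (pCons a p) \<longleftrightarrow> a \<in> A \<and> poly_over A p"
  unfolding poly_over_def by (auto simp: coeff_pCons split: nat.splits)

lemma poly_over_0: "0 \<in> A \<Longrightarrow> poly_over A 0"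
  unfolding poly_over_def by simp

lemma quadratic_decomposition_of_denominator_quartic:
  fixes S :: "complex set"
  assumes G: "poly_over S G" "degree G \<ge> 2" and H: "poly_over S H" "degree H \<ge> 2"
    and comp: "pcompose G H = [:0, e * t, e + s * t ^ 2, 2 * s * t, s:]" and "s \<noteq> 0"
  obtains A B r p where "A \<in> S" "B \<in> S" "r \<in> S" "p \<in> S" "p \<noteq> 0" "p * t \<in> S"
    "s = A * p ^ 2" "e = p * (2 * A * r + B)"
proof -
  have "degree G = 2 \<and> degree H = 2"
    using degree_pcompose_eq_4_imp_quadratic[OF _ G(2) H(2)] comp \<open>s \<noteq> 0\<close> by (simp add: eval_nat_numeral)
  hence deg: "degree G = 2" "degree H = 2" by simp_all
  define A B C where "A = Polynomial.coeff G 2" "B = Polynomial.coeff G 1" "C = Polynomial.coeff G 0"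
  define p q r where "p = Polynomial.coeff H 2" "q = Polynomial.coeff H 1" "r = Polynomial.coeff H 0"
  have GH: "pcompose [:C, B, A:] [:r, q, p:] = [:0, e * t, e + s * t ^ 2, 2 * s * t, s:]"
    using comp poly_eq_if_degree_le_2[of G] poly_eq_if_degree_le_2[of H] deg
    unfolding A_B_C_def p_q_r_def by simp
  have "A \<noteq> 0" unfolding A_B_C_def using leading_coeff_neq_0[of G] deg(1) by fastforce
  have "p \<noteq> 0" unfolding p_q_r_def using leading_coeff_neq_0[of H] deg(2) by fastforce
  have in_S: "A \<in> S" "B \<in> S" "p \<in> S" "q \<in> S" "r \<in> S"
    using G(1) H(1) unfolding poly_over_def A_B_C_def p_q_r_def by auto
  have c4: "s = A * p ^ 2"
    using arg_cong[OF GH, of "\<lambda>P. Polynomial.coeff P 4"]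
    by (simp add: coeff_pcompose_quadratics eval_nat_numeral algebra_simps)
  have c3: "2 * s * t = 2 * A * p * q"
    using arg_cong[OF GH, of "\<lambda>P. Polynomial.coeff P 3"]
    by (simp add: coeff_pcompose_quadratics eval_nat_numeral algebra_simps)
  have c2: "e + s * t ^ 2 = A * (q ^ 2 + 2 * p * r) + B * p"
    using arg_cong[OF GH, of "\<lambda>P. Polynomial.coeff P 2"]
    by (simp add: coeff_pcompose_quadratics eval_nat_numeral algebra_simps)
  have "p * t = q" using c3 c4 \<open>A \<noteq> 0\<close> \<open>p \<noteq> 0\<close> by (simp add: power2_eq_square algebra_simps)
  hence q: "q = p * t" by (rule sym)
  have "e = p * (2 * A * r + B)" using c2 c4 q by (simp add: power2_eq_square algebra_simps)
  with in_S q c4 \<open>p \<noteq> 0\<close> that show ?thesis by blast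
qed

section \<open>The ring of integers is factorial if decompositions descend to it\<close>

context number_field_basis
begin

abbreviation OK :: "complex set" where
  "OK \<equiv> ring_of_integers K"

lemma mem_OK_iff: "x \<in> OK \<longleftrightarrow> x \<in> K \<and> algebraic_int x"
  unfolding ring_of_integers_def algebraic_integer_iff_algebraic_int by simp

lemma OK_0: "0 \<in> OK" and OK_1: "1 \<in> OK"
  and OK_add: "x \<in> OK \<Longrightarrow> y \<in> OK \<Longrightarrow> x + y \<in> OK"
  and OK_diff: "x \<in> OK \<Longrightarrow> y \<in> OK \<Longrightarrow> x - y \<in> OK"
  and OK_mult: "x \<in> OK \<Longrightarrow> y \<in> OK \<Longrightarrow> x * y \<in> OK"
  unfolding mem_OK_iff
  by (auto intro: K_0 K_1 K_add K_diff K_mult algebraic_int_add algebraic_int_diff algebraic_int_mult)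

lemma OK_2: "2 \<in> OK"
  using K_add[OF K_1 K_1] by (simp add: mem_OK_iff)

lemma domain_ring_of_integers: "domain (subring_structure OK)"
proof -
  let ?S = "subring_structure OK"
  have [simp]: "carrier ?S = OK" "mult ?S = (*)" "one ?S = 1" "zero ?S = 0" "add ?S = (+)"
    unfolding subring_structure_def by simp_all
  have "abelian_group ?S"
  proof (rule abelian_groupI)
    fix x assume "x \<in> carrier ?S"
    thus "\<exists>y\<in>carrier ?S. y \<oplus>\<^bsub>?S\<^esub> x = \<zero>\<^bsub>?S\<^esub>"
      using OK_diff[OF OK_0] by (intro bexI[of _ "-x"]) auto
  qed (auto intro: OK_add OK_0 simp: algebra_simps)
  moreover have "comm_monoid ?S"
    by (rule comm_monoidI) (auto intro: OK_mult OK_1 simp: algebra_simps)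
  ultimately have "cring ?S"
    by (intro cringI) (simp_all add: algebra_simps)
  thus ?thesis by (rule domainI) auto
qed

lemma divides_ring_of_integers_iff:
  assumes "x \<in> OK" "x \<noteq> 0" "y \<in> OK" "y \<noteq> 0"
  shows "x divides\<^bsub>mult_of (subring_structure OK)\<^esub> y \<longleftrightarrow> y / x \<in> OK"
proof
  assume "x divides\<^bsub>mult_of (subring_structure OK)\<^esub> y"
  then obtain c where "c \<in> OK" "y = x * c"
    unfolding factor_def by (auto simp: subring_structure_def)
  thus "y / x \<in> OK" using assms(2) by simp
next
  assume "y / x \<in> OK"
  moreover have "y = x * (y / x)" "y / x \<noteq> 0" using assms by auto
  ultimately have "\<exists>c\<in>OK - {0}. y = x * c" by blast
  thus "x divides\<^bsub>mult_of (subring_structure OK)\<^esub> y"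
    unfolding factor_def by (simp add: subring_structure_def)
qed

lemma divisor_chain_condition_ring_of_integers:
  "divisor_chain_condition_monoid (mult_of (subring_structure OK))"
proof -
  interpret domain "subring_structure OK" by (rule domain_ring_of_integers)
  let ?G = "mult_of (subring_structure OK)"
  have "{(x, y). x \<in> carrier ?G \<and> y \<in> carrier ?G \<and> properfactor ?G x y} \<subseteq> measure abs_norm"
  proof safe
    fix x y assume xy: "x \<in> carrier ?G" "y \<in> carrier ?G" "properfactor ?G x y"
    have x: "x \<in> OK" "x \<noteq> 0" and y: "y \<in> OK" "y \<noteq> 0" using xy(1,2) by (auto simp: subring_structure_def)
    have "y / x \<in> OK" "x / y \<notin> OK"
      using xy(3) divides_ring_of_integers_iff[OF x y] divides_ring_of_integers_iff[OF y x]
      unfolding properfactor_def by auto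
    moreover have "x / y \<in> K" using x y by (auto simp: mem_OK_iff intro: K_divide)
    ultimately have "abs_norm x < abs_norm (x * (y / x))"
      using x y by (intro abs_norm_less_mult) (auto simp: mem_OK_iff)
    thus "(x, y) \<in> measure abs_norm" using x by simp
  qed
  hence "wf {(x, y). x \<in> carrier ?G \<and> y \<in> carrier ?G \<and> properfactor ?G x y}"
    using wf_subset[OF wf_measure] by blast
  thus ?thesis by unfold_locales
qed

lemma denominator_quartic_decomposition:
  assumes descend: "\<And>f. poly_over OK f \<Longrightarrow> decomposable_over K f \<Longrightarrow> decomposable_over OK f"
    and t: "t \<in> K" and p0: "p0 \<in> OK" "p0 \<noteq> 0" "p0 * t \<in> OK" and e: "e \<in> OK" "e * t \<in> OK"
  obtains A B r p where "A \<in> OK" "B \<in> OK" "r \<in> OK" "p \<in> OK" "p \<noteq> 0" "p * t \<in> OK"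
    "p0 ^ 2 = A * p ^ 2" "e = p * (2 * A * r + B)"
proof -
  define s where "s = p0 ^ 2"
  define f where "f = [:0, e * t, e + s * t ^ 2, 2 * s * t, s:]"
  have "s \<noteq> 0" using p0(2) unfolding s_def by simp
  have s_OK: "s \<in> OK" unfolding s_def power2_eq_square by (rule OK_mult[OF p0(1) p0(1)])
  have "e + s * t ^ 2 = e + (p0 * t) * (p0 * t)" "2 * s * t = 2 * p0 * (p0 * t)"
    unfolding s_def by (simp_all add: power2_eq_square algebra_simps)
  hence "e + s * t ^ 2 \<in> OK" "2 * s * t \<in> OK"
    using e(1) p0(1,3) by (metis OK_add OK_mult OK_2)+
  hence "poly_over OK f" unfolding f_def using OK_0 e s_OK by (simp add: poly_over_pCons poly_over_0)
  moreover have "decomposable_over K f"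
    unfolding decomposable_over_def
  proof (intro conjI exI)
    show "f = pcompose [:0, e, s:] [:0, t, 1:]"
      unfolding f_def by (rule pcompose_denominator_quartic[symmetric])
    show "poly_over K [:0, e, s:]" "poly_over K [:0, t, 1:]"
      using K_0 K_1 t e s_OK by (simp_all add: mem_OK_iff poly_over_pCons poly_over_0)
  qed (use \<open>s \<noteq> 0\<close> in \<open>simp_all add: f_def eval_nat_numeral\<close>)
  ultimately obtain G H where "poly_over OK G" "degree G \<ge> 2" "poly_over OK H" "degree H \<ge> 2"
      "pcompose G H = f"
    using descend unfolding decomposable_over_def by metis
  thus ?thesis
    using quadratic_decomposition_of_denominator_quartic \<open>s \<noteq> 0\<close> that unfolding f_def s_def by metis
qed

lemma minimal_denominator_divides:
  assumes descend: "\<And>f. poly_over OK f \<Longrightarrow> decomposable_over K f \<Longrightarrow> decomposable_over OK f"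
    and t: "t \<in> K" and p0: "p0 \<in> OK" "p0 \<noteq> 0" "p0 * t \<in> OK"
    and minimal: "\<And>p. p \<in> OK \<Longrightarrow> p \<noteq> 0 \<Longrightarrow> p * t \<in> OK \<Longrightarrow> abs_norm p0 \<le> abs_norm p"
    and e: "e \<in> OK" "e * t \<in> OK"
  shows "e / p0 \<in> OK"
proof -
  obtain A B r p where ABrp: "A \<in> OK" "B \<in> OK" "r \<in> OK" "p \<in> OK" "p \<noteq> 0" "p * t \<in> OK"
      "p0 ^ 2 = A * p ^ 2" "e = p * (2 * A * r + B)"
    using denominator_quartic_decomposition[OF descend t p0 e] by blast
  define u where "u = p0 / p"
  have "u \<in> K" unfolding u_def using p0(1) ABrp(4) by (simp add: mem_OK_iff K_divide)
  have "u ^ 2 = A" unfolding u_def using ABrp(5,7) by (simp add: power_divide field_simps)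
  hence "algebraic_int u"
    using algebraic_int_root[of A "Polynomial.monom 1 2" u] ABrp(1)
    by (simp add: mem_OK_iff poly_monom degree_monom_eq)
  have "u \<noteq> 0" "p * u = p0" unfolding u_def using p0(2) ABrp(5) by simp_all
  have "algebraic_int (inverse u)"
  proof (rule ccontr)
    assume "\<not> algebraic_int (inverse u)"
    hence "abs_norm p < abs_norm (p * u)"
      using abs_norm_less_mult \<open>u \<in> K\<close> \<open>algebraic_int u\<close> \<open>u \<noteq> 0\<close> ABrp(4,5)
      by (simp add: mem_OK_iff)
    thus False using minimal[OF ABrp(4-6)] \<open>p * u = p0\<close> by simp
  qed
  hence "inverse u \<in> OK" using K_inverse[OF \<open>u \<in> K\<close>] by (simp add: mem_OK_iff)
  moreover have "e / p0 = inverse u * (2 * A * r + B)"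
    unfolding \<open>p * u = p0\<close>[symmetric] ABrp(8) using ABrp(5) \<open>u \<noteq> 0\<close> by (simp add: field_simps)
  moreover have "2 * A * r + B \<in> OK"
    using ABrp(1-3) OK_2 by (simp add: OK_add OK_mult)
  ultimately show ?thesis by (simp add: OK_mult)
qed

lemma gcd_condition_ring_of_integers:
  assumes descend: "\<And>f. poly_over OK f \<Longrightarrow> decomposable_over K f \<Longrightarrow> decomposable_over OK f"
  shows "gcd_condition_monoid (mult_of (subring_structure OK))"
proof -
  interpret domain "subring_structure OK" by (rule domain_ring_of_integers)
  let ?G = "mult_of (subring_structure OK)"
  show ?thesis
  proof unfold_locales
    fix a b assume "a \<in> carrier ?G" "b \<in> carrier ?G"
    hence a: "a \<in> OK" "a \<noteq> 0" and b: "b \<in> OK" "b \<noteq> 0" by (auto simp: subring_structure_def)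
    define t where "t = a / b"
    have t: "t \<in> K" unfolding t_def using a b by (simp add: mem_OK_iff K_divide)
    have "b * t \<in> OK" unfolding t_def using a b by simp
    then obtain p0 where p0: "p0 \<in> OK \<and> p0 \<noteq> 0 \<and> p0 * t \<in> OK"
      and minimal: "\<And>p. p \<in> OK \<and> p \<noteq> 0 \<and> p * t \<in> OK \<Longrightarrow> abs_norm p0 \<le> abs_norm p"
      using ex_has_least_nat[of "\<lambda>p. p \<in> OK \<and> p \<noteq> 0 \<and> p * t \<in> OK" b abs_norm] b by blast
    have divides: "e / p0 \<in> OK" if "e \<in> OK" "e * t \<in> OK" for e
      using minimal_denominator_divides[OF descend t _ _ _ _ that] p0 minimal by blast
    define d where "d = b / p0"
    have d: "d \<in> OK" "d \<noteq> 0" unfolding d_def using divides[OF b(1) \<open>b * t \<in> OK\<close>] p0 b by auto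
    have "d gcdof\<^bsub>?G\<^esub> a b"
      unfolding isgcd_def
    proof (intro conjI ballI impI)
      show "d divides\<^bsub>?G\<^esub> a" unfolding divides_ring_of_integers_iff[OF d a]
        using p0 b(2) unfolding d_def t_def by (simp add: field_simps)
      show "d divides\<^bsub>?G\<^esub> b" unfolding divides_ring_of_integers_iff[OF d b]
        using p0 b(2) unfolding d_def by simp
      fix y assume y: "y \<in> carrier ?G" "y divides\<^bsub>?G\<^esub> a \<and> y divides\<^bsub>?G\<^esub> b"
      have y': "y \<in> OK" "y \<noteq> 0" using y(1) by (auto simp: subring_structure_def)
      have "a / y \<in> OK" "b / y \<in> OK"
        using y(2) divides_ring_of_integers_iff[OF y' a] divides_ring_of_integers_iff[OF y' b] by auto
      moreover have "(b / y) * t = a / y" unfolding t_def using b(2) by simp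
      ultimately have "(b / y) / p0 \<in> OK" using divides by metis
      moreover have "(b / y) / p0 = d / y" unfolding d_def by simp
      ultimately show "y divides\<^bsub>?G\<^esub> d" unfolding divides_ring_of_integers_iff[OF y' d] by simp
    qed
    thus "\<exists>c. c \<in> carrier ?G \<and> c gcdof\<^bsub>?G\<^esub> a b" using d by (auto simp: subring_structure_def)
  qed
qed

lemma factorial_ring_of_integers_if_decompositions_descend:
  assumes "\<And>f. poly_over OK f \<Longrightarrow> decomposable_over K f \<Longrightarrow> decomposable_over OK f"
  shows "factorial_domain (subring_structure OK)"
  unfolding factorial_domain_def
  using domain_ring_of_integers factorial_condition_two divisor_chain_condition_ring_of_integers
    gcd_condition_ring_of_integers[OF assms] by blast

end

theorem theorem3p1:
  fixes K :: "complex set"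
  assumes "number_field K"
    and "\<not> factorial_domain (subring_structure (ring_of_integers K))"
  shows "\<exists>f. poly_over (ring_of_integers K) f \<and> Polynomial.degree f \<ge> 2 \<and>
             indecomposable_over (ring_of_integers K) f \<and> decomposable_over K f"
proof -
  obtain n b where "number_field_basis K n b" using number_field_basis_exists[OF assms(1)] by blast
  then interpret number_field_basis K n b .
  obtain f where "poly_over OK f" "decomposable_over K f" "\<not> decomposable_over OK f"
    using factorial_ring_of_integers_if_decompositions_descend assms(2) by blast
  thus ?thesis unfolding indecomposable_over_def decomposable_over_def by blast
qed

end
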